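(* Let $n=n_{obs}+n_{mis}$ with $n_{obs}\ge2$, $n_{mis}\ge1$. Let $Y_1,\dots,Y_{n_{obs}}$ be i.i.d. $N(\mu,\sigma^2)$, with $\bar Y_{obs}$ their mean and $CSS=\sum_{i=1}^{n_{obs}}(Y_i-\bar Y_{obs})^2$. Fix a real $\nu_{prior}$ with $n_{obs}+\nu_{prior}>3$ and set $\nu_{PD}=\nu_{prior}+n_{obs}-1$. For each $d=1,\dots,D$ ($D\ge1$), independently, draw $U_{PD,d}\sim\chi^2_{\nu_{PD}}$ and $Z_{PD,d}\sim N(0,1/n_{obs})$, set $\hat\sigma^2_{d}=CSS/U_{PD,d}$, $\hat\mu_d=\bar Y_{obs}+\hat\sigma_d Z_{PD,d}$, draw $Y_{imp,i,d}=\hat\mu_d+\hat\sigma_d Z_{imp,i,d}$ for $i=n_{obs}+1,\dots,n$ with $Z_{imp,i,d}$ i.i.d. $N(0,1)$ (all random variables independent of each other and of the data), and let $\hat\mu_{SI,d}$ be the sample mean of the $n$ values $Y_1,\dots,Y_{n_{obs}},Y_{imp,n_{obs}+1,d},\dots,Y_{imp,n,d}$. Let $\hat\mu_{MI,PD}=\frac1D\sum_{d=1}^D\hat\mu_{SI,d}$. Then $E(\hat\mu_{MI,PD})=\mu$ and $$\operatorname{Var}(\hat\mu_{MI,PD})=\frac{\sigma^2}{n_{obs}}\left(1+\frac{n_{mis}(n_{obs}-1)}{Dn(n_{obs}+\nu_{prior}-3)}\right).$$ *)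

theory Defs
  imports "HOL-Probability.Probability"
begin

definition chi2_density :: "real \<Rightarrow> real \<Rightarrow> real" where
  "chi2_density k x =
     (if x > 0 then x powr (k / 2 - 1) * exp (- x / 2) / (2 powr (k / 2) * Gamma (k / 2)) else 0)"

datatype rv_idx = IdxY nat | IdxU nat | IdxZPD nat | IdxZimp nat nat

definition all_rvs ::
  "(nat \<Rightarrow> 'a \<Rightarrow> real) \<Rightarrow> (nat \<Rightarrow> 'a \<Rightarrow> real) \<Rightarrow> (nat \<Rightarrow> 'a \<Rightarrow> real) \<Rightarrow>
   (nat \<Rightarrow> nat \<Rightarrow> 'a \<Rightarrow> real) \<Rightarrow> rv_idx \<Rightarrow> 'a \<Rightarrow> real" where
  "all_rvs Y U ZPD Zimp j = (case j of IdxY i \<Rightarrow> Y i | IdxU d \<Rightarrow> U d | IdxZPD d \<Rightarrow> ZPD d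
                                  | IdxZimp i d \<Rightarrow> Zimp i d)"

definition rv_index_set :: "nat \<Rightarrow> nat \<Rightarrow> nat \<Rightarrow> rv_idx set" where
  "rv_index_set n_obs n_mis D =
     IdxY ` {..<n_obs} \<union> IdxU ` {..<D} \<union> IdxZPD ` {..<D}
     \<union> {IdxZimp i d | i d. i < n_mis \<and> d < D}"

definition ybar_obs :: "nat \<Rightarrow> (nat \<Rightarrow> 'a \<Rightarrow> real) \<Rightarrow> 'a \<Rightarrow> real" where
  "ybar_obs n_obs Y \<omega> = (\<Sum>i<n_obs. Y i \<omega>) / real n_obs"

definition CSS :: "nat \<Rightarrow> (nat \<Rightarrow> 'a \<Rightarrow> real) \<Rightarrow> 'a \<Rightarrow> real" where
  "CSS n_obs Y \<omega> = (\<Sum>i<n_obs. (Y i \<omega> - ybar_obs n_obs Y \<omega>)\<^sup>2)"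

definition sigma_hat :: "nat \<Rightarrow> (nat \<Rightarrow> 'a \<Rightarrow> real) \<Rightarrow> (nat \<Rightarrow> 'a \<Rightarrow> real) \<Rightarrow> nat \<Rightarrow> 'a \<Rightarrow> real" where
  "sigma_hat n_obs Y U d \<omega> = sqrt (CSS n_obs Y \<omega> / U d \<omega>)"

definition mu_hat ::
  "nat \<Rightarrow> (nat \<Rightarrow> 'a \<Rightarrow> real) \<Rightarrow> (nat \<Rightarrow> 'a \<Rightarrow> real) \<Rightarrow> (nat \<Rightarrow> 'a \<Rightarrow> real) \<Rightarrow> nat \<Rightarrow> 'a \<Rightarrow> real" where
  "mu_hat n_obs Y U ZPD d \<omega> = ybar_obs n_obs Y \<omega> + sigma_hat n_obs Y U d \<omega> * ZPD d \<omega>"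

text \<open>Imputed value for the i-th missing unit (i < n_mis, i.e. unit n_obs+1+i), imputation d.\<close>
definition Y_imp ::
  "nat \<Rightarrow> (nat \<Rightarrow> 'a \<Rightarrow> real) \<Rightarrow> (nat \<Rightarrow> 'a \<Rightarrow> real) \<Rightarrow> (nat \<Rightarrow> 'a \<Rightarrow> real) \<Rightarrow>
   (nat \<Rightarrow> nat \<Rightarrow> 'a \<Rightarrow> real) \<Rightarrow> nat \<Rightarrow> nat \<Rightarrow> 'a \<Rightarrow> real" where
  "Y_imp n_obs Y U ZPD Zimp i d \<omega> =
     mu_hat n_obs Y U ZPD d \<omega> + sigma_hat n_obs Y U d \<omega> * Zimp i d \<omega>"

definition mu_SI ::
  "nat \<Rightarrow> nat \<Rightarrow> (nat \<Rightarrow> 'a \<Rightarrow> real) \<Rightarrow> (nat \<Rightarrow> 'a \<Rightarrow> real) \<Rightarrow> (nat \<Rightarrow> 'a \<Rightarrow> real) \<Rightarrow>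
   (nat \<Rightarrow> nat \<Rightarrow> 'a \<Rightarrow> real) \<Rightarrow> nat \<Rightarrow> 'a \<Rightarrow> real" where
  "mu_SI n_obs n_mis Y U ZPD Zimp d \<omega> =
     ((\<Sum>i<n_obs. Y i \<omega>) + (\<Sum>i<n_mis. Y_imp n_obs Y U ZPD Zimp i d \<omega>)) / real (n_obs + n_mis)"

definition mu_MI_PD ::
  "nat \<Rightarrow> nat \<Rightarrow> nat \<Rightarrow> (nat \<Rightarrow> 'a \<Rightarrow> real) \<Rightarrow> (nat \<Rightarrow> 'a \<Rightarrow> real) \<Rightarrow> (nat \<Rightarrow> 'a \<Rightarrow> real) \<Rightarrow>
   (nat \<Rightarrow> nat \<Rightarrow> 'a \<Rightarrow> real) \<Rightarrow> 'a \<Rightarrow> real" where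
  "mu_MI_PD n_obs n_mis D Y U ZPD Zimp \<omega> =
     (\<Sum>d<D. mu_SI n_obs n_mis Y U ZPD Zimp d \<omega>) / real D"

end

theory Submission
  imports Defs
begin

text \<open>
  Each single-imputation estimate splits as mu_SI,d = Ybar_obs + sigma_hat_d * W_d, where
  W_d = (n_mis Z_PD,d + sum_i Z_imp,i,d) / n is centred normal with variance n_mis / (n_obs n)
  and independent of the observed data, of U_PD,d and of the other W_d'. Hence all cross terms
  vanish, E mu_MI,PD = mu, and Var mu_MI,PD = Var Ybar_obs + E (sigma_hat_d^2) Var (W_d) / D,
  where E (sigma_hat_d^2) = E (CSS) E (1 / U_PD,d) = (n_obs - 1) sigma^2 / (nu_PD - 2) by the
  independence of CSS and U_PD,d and the inverse moment of the chi-squared distribution.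
  Independence of such derived quantities comes from viewing each of them as a Borel function
  of a block of coordinates of the jointly independent family all_rvs: functions of disjoint
  blocks are independent.
\<close>

section \<open>The estimator as observed mean plus scaled noise\<close>

definition imputation_noise ::
  "nat \<Rightarrow> nat \<Rightarrow> (nat \<Rightarrow> 'a \<Rightarrow> real) \<Rightarrow> (nat \<Rightarrow> nat \<Rightarrow> 'a \<Rightarrow> real) \<Rightarrow> nat \<Rightarrow> 'a \<Rightarrow> real" where
  "imputation_noise n_obs n_mis ZPD Zimp d \<omega> =
     (real n_mis * ZPD d \<omega> + (\<Sum>i<n_mis. Zimp i d \<omega>)) / real (n_obs + n_mis)"

lemma mu_SI_decomposition:
  assumes "n_obs > 0"
  shows "mu_SI n_obs n_mis Y U ZPD Zimp d \<omega> =
    ybar_obs n_obs Y \<omega> + sigma_hat n_obs Y U d \<omega> * imputation_noise n_obs n_mis ZPD Zimp d \<omega>"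
proof -
  define y s where "y = ybar_obs n_obs Y \<omega>" and "s = sigma_hat n_obs Y U d \<omega>"
  have "(\<Sum>i<n_obs. Y i \<omega>) = real n_obs * y"
    using assms by (simp add: y_def ybar_obs_def)
  moreover have "(\<Sum>i<n_mis. Y_imp n_obs Y U ZPD Zimp i d \<omega>)
      = real n_mis * y + s * (real n_mis * ZPD d \<omega> + (\<Sum>i<n_mis. Zimp i d \<omega>))"
    by (simp add: Y_imp_def mu_hat_def y_def s_def sum.distrib sum_distrib_left algebra_simps)
  ultimately show ?thesis
    using assms
    by (simp add: mu_SI_def imputation_noise_def y_def[symmetric] s_def[symmetric] field_simps)
qed

lemma mu_MI_PD_decomposition:
  assumes "n_obs > 0" "D > 0"
  shows "mu_MI_PD n_obs n_mis D Y U ZPD Zimp \<omega> = ybar_obs n_obs Y \<omega> +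
    (\<Sum>d<D. sigma_hat n_obs Y U d \<omega> * imputation_noise n_obs n_mis ZPD Zimp d \<omega>) / real D"
  using assms by (simp add: mu_MI_PD_def mu_SI_decomposition sum.distrib add_divide_distrib)

lemma CSS_eq_centred:
  assumes "n > 0"
  shows "CSS n Y \<omega> = (\<Sum>i<n. (Y i \<omega> - m)\<^sup>2) - real n * (ybar_obs n Y \<omega> - m)\<^sup>2"
proof -
  define b where "b = ybar_obs n Y \<omega> - m"
  have "(\<Sum>i<n. Y i \<omega> - m) = real n * b"
    using assms by (simp add: b_def ybar_obs_def sum_subtractf algebra_simps)
  then have "(\<Sum>i<n. (Y i \<omega> - m - b)\<^sup>2) = (\<Sum>i<n. (Y i \<omega> - m)\<^sup>2) - real n * b\<^sup>2"
    by (simp add: power2_diff sum.distrib sum_subtractf sum_distrib_left[symmetric]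
        power2_eq_square algebra_simps)
  then show ?thesis
    by (simp add: CSS_def b_def)
qed

lemma sigma_hat_square: "(sigma_hat n Y U d \<omega>)\<^sup>2 = CSS n Y \<omega> * (1 / \<bar>U d \<omega>\<bar>)"
proof -
  have "(sigma_hat n Y U d \<omega>)\<^sup>2 = \<bar>CSS n Y \<omega> / U d \<omega>\<bar>"
    unfolding sigma_hat_def by (metis power2_eq_square real_sqrt_mult real_sqrt_abs)
  moreover have "CSS n Y \<omega> \<ge> 0"
    by (simp add: CSS_def sum_nonneg)
  ultimately show ?thesis
    by (simp add: abs_div)
qed

section \<open>Moments of normal and chi-squared variables\<close>

lemma nn_integral_powr_exp_half:
  fixes a :: real
  assumes "a > 0"
  shows "(\<integral>\<^sup>+x. ennreal (indicator {0<..} x * x powr (a - 1) * exp (- x / 2)) \<partial>lborel)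
         = ennreal (2 powr a * Gamma a)"
proof -
  let ?f = "\<lambda>x::real. ennreal (indicator {0<..} x * x powr (a - 1) * exp (- x / 2))"
  have "(\<integral>\<^sup>+x. ?f x \<partial>lborel) = 2 * (\<integral>\<^sup>+x. ?f (0 + 2 * x) \<partial>lborel)"
    using nn_integral_real_affine[of ?f 2 0] by simp
  also have "(\<lambda>x. ?f (0 + 2 * x)) =
      (\<lambda>x. ennreal (2 powr (a - 1)) * ennreal (indicator {0..} x * x powr (a - 1) / exp x))"
  proof
    fix x :: real
    show "?f (0 + 2 * x) = ennreal (2 powr (a - 1)) * ennreal (indicator {0..} x * x powr (a - 1) / exp x)"
      by (cases "x > 0"; cases "x = 0")
        (auto simp: indicator_def powr_mult exp_minus field_simps simp flip: ennreal_mult)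
  qed
  also have "(\<integral>\<^sup>+x. ennreal (2 powr (a - 1)) * ennreal (indicator {0..} x * x powr (a - 1) / exp x) \<partial>lborel)
      = ennreal (2 powr (a - 1)) * Gamma a"
    by (subst nn_integral_cmult) (auto simp: Gamma_conv_nn_integral_real[OF assms])
  also have "2 * (ennreal (2 powr (a - 1)) * ennreal (Gamma a)) = ennreal (2 * (2 powr (a - 1) * Gamma a))"
    using assms by (simp add: ennreal_mult Gamma_real_nonneg)
  finally show ?thesis
    by (simp add: powr_diff)
qed

lemma nn_integral_chi2_density_inverse:
  fixes k :: real
  assumes "k > 2"
  shows "(\<integral>\<^sup>+x. ennreal (chi2_density k x) * ennreal (1 / \<bar>x\<bar>) \<partial>lborel) = ennreal (1 / (k - 2))"
proof -
  define a where "a = k / 2 - 1"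
  have a: "a > 0" and k: "k = 2 * a + 2"
    using assms by (simp_all add: a_def)
  define C where "C = 1 / (2 powr (a + 1) * (a * Gamma a))"
  have C: "C \<ge> 0"
    using a by (simp add: C_def)
  \<comment> \<open>Dividing by x lowers the shape parameter of the Gamma kernel by one.\<close>
  have kernel: "ennreal (chi2_density k x) * ennreal (1 / \<bar>x\<bar>)
        = ennreal C * ennreal (indicator {0<..} x * x powr (a - 1) * exp (- x / 2))" for x
  proof (cases "x > 0")
    case True
    have "x powr (k / 2 - 1) = x powr (a - 1) * x"
      using True powr_add[of x "a - 1" 1] by (simp add: k add_divide_distrib)
    moreover have "Gamma (k / 2) = a * Gamma a"
      using Gamma_plus1[of a] a by (simp add: k add_divide_distrib nonpos_Ints_def)
    ultimately have "chi2_density k x * (1 / \<bar>x\<bar>) = C * (x powr (a - 1) * exp (- x / 2))"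
      using True a by (simp add: chi2_density_def C_def k add_divide_distrib field_simps)
    then show ?thesis
      using True C by (simp add: ennreal_mult''[symmetric] ennreal_mult[symmetric])
  qed (simp add: chi2_density_def)
  have "(\<integral>\<^sup>+x. ennreal (chi2_density k x) * ennreal (1 / \<bar>x\<bar>) \<partial>lborel)
      = ennreal C * ennreal (2 powr a * Gamma a)"
    using nn_integral_powr_exp_half[OF a] by (simp add: kernel nn_integral_cmult)
  also have "\<dots> = ennreal (1 / (k - 2))"
    using a C Gamma_real_pos[OF a]
    by (simp add: ennreal_mult[symmetric] C_def k powr_add field_simps less_imp_neq[symmetric])
  finally show ?thesis .
qed

lemma (in prob_space) chi2_distributed_inverse_moment:
  assumes U: "distributed M lborel U (chi2_density k)" and "k > 2"
  shows "integrable M (\<lambda>\<omega>. 1 / \<bar>U \<omega>\<bar>)"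
    and "expectation (\<lambda>\<omega>. 1 / \<bar>U \<omega>\<bar>) = 1 / (k - 2)"
proof -
  have "(\<integral>\<^sup>+\<omega>. ennreal (1 / \<bar>U \<omega>\<bar>) \<partial>M) = ennreal (1 / (k - 2))"
    using distributed_nn_integral[OF U, of "\<lambda>x. ennreal (1 / \<bar>x\<bar>)"]
      nn_integral_chi2_density_inverse[OF \<open>k > 2\<close>] by simp
  moreover have "(\<lambda>\<omega>. 1 / \<bar>U \<omega>\<bar>) \<in> borel_measurable M"
    using distributed_measurable[OF U] by simp
  ultimately show "integrable M (\<lambda>\<omega>. 1 / \<bar>U \<omega>\<bar>)"
    and "expectation (\<lambda>\<omega>. 1 / \<bar>U \<omega>\<bar>) = 1 / (k - 2)"
    using \<open>k > 2\<close> by (subst (asm) nn_integral_eq_integrable; simp)+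
qed

lemma (in prob_space) normal_distributed_moments:
  assumes "0 < s" and Z: "distributed M lborel Z (normal_density m s)"
  shows "integrable M (\<lambda>\<omega>. (Z \<omega> - m)\<^sup>2)"
    and "integrable M Z"
    and "expectation Z = m"
    and "expectation (\<lambda>\<omega>. (Z \<omega> - m)\<^sup>2) = s\<^sup>2"
proof -
  show "integrable M (\<lambda>\<omega>. (Z \<omega> - m)\<^sup>2)"
    using distributed_integrable[OF Z, of "\<lambda>x. (x - m)\<^sup>2"] integrable_normal_moment[OF \<open>0 < s\<close>, of m 2]
    by simp
  show "integrable M Z"
    using distributed_integrable_var[OF Z] integrable_normal_moment_nz_1[OF \<open>0 < s\<close>, of m] by simp
  show "expectation Z = m"
    by (rule normal_distributed_expectation[OF assms])
  then show "expectation (\<lambda>\<omega>. (Z \<omega> - m)\<^sup>2) = s\<^sup>2"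
    using normal_distributed_variance[OF assms] by simp
qed

lemma (in prob_space) weighted_sum_indep_normal:
  assumes "finite J" "J \<noteq> {}" and indep: "indep_vars (\<lambda>_. borel) X J"
    and "\<And>j. j \<in> J \<Longrightarrow> c j \<noteq> 0" "\<And>j. j \<in> J \<Longrightarrow> 0 < s j"
    and normal: "\<And>j. j \<in> J \<Longrightarrow> distributed M lborel (X j) (normal_density (m j) (s j))"
  shows "distributed M lborel (\<lambda>\<omega>. \<Sum>j\<in>J. c j * X j \<omega>)
           (normal_density (\<Sum>j\<in>J. c j * m j) (sqrt (\<Sum>j\<in>J. (c j * s j)\<^sup>2)))"
proof -
  have "indep_vars (\<lambda>_. borel) (\<lambda>j \<omega>. c j * X j \<omega>) J"
    by (rule indep_vars_compose2[OF indep]) simp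
  moreover have "distributed M lborel (\<lambda>\<omega>. c j * X j \<omega>) (normal_density (c j * m j) (\<bar>c j\<bar> * s j))"
    if "j \<in> J" for j
    using normal_density_affine[OF normal[OF that], of "c j" 0] assms(4,5) that by simp
  ultimately show ?thesis
    using sum_indep_normal[of J "\<lambda>j \<omega>. c j * X j \<omega>" "\<lambda>j. \<bar>c j\<bar> * s j" "\<lambda>j. c j * m j"] assms
    by (simp add: power_mult_distrib)
qed

lemma integrable_mult_of_square_integrable:
  fixes f g :: "'a \<Rightarrow> real"
  assumes "f \<in> borel_measurable M" "g \<in> borel_measurable M"
    and "integrable M (\<lambda>x. (f x)\<^sup>2)" "integrable M (\<lambda>x. (g x)\<^sup>2)"
  shows "integrable M (\<lambda>x. f x * g x)"
proof (rule Bochner_Integration.integrable_bound[where f="\<lambda>x. (f x)\<^sup>2 + (g x)\<^sup>2"])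
  have "\<bar>f x * g x\<bar> \<le> (f x)\<^sup>2 + (g x)\<^sup>2" for x
  proof -
    have "2 * \<bar>f x\<bar> * \<bar>g x\<bar> \<le> (f x)\<^sup>2 + (g x)\<^sup>2"
      using sum_squares_bound[of "\<bar>f x\<bar>" "\<bar>g x\<bar>"] by (simp add: power2_abs)
    moreover have "0 \<le> \<bar>f x\<bar> * \<bar>g x\<bar>"
      by simp
    ultimately show ?thesis
      unfolding abs_mult by linarith
  qed
  then show "AE x in M. norm (f x * g x) \<le> norm ((f x)\<^sup>2 + (g x)\<^sup>2)"
    by simp
qed (use assms in auto)

lemma (in prob_space) expectation_square_sum_orthogonal:
  fixes T :: "'i \<Rightarrow> 'a \<Rightarrow> real"
  assumes "finite J"
    and int: "\<And>i j. i \<in> J \<Longrightarrow> j \<in> J \<Longrightarrow> integrable M (\<lambda>\<omega>. T i \<omega> * T j \<omega>)"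
    and orth: "\<And>i j. i \<in> J \<Longrightarrow> j \<in> J \<Longrightarrow> i \<noteq> j \<Longrightarrow> expectation (\<lambda>\<omega>. T i \<omega> * T j \<omega>) = 0"
  shows "integrable M (\<lambda>\<omega>. (\<Sum>i\<in>J. T i \<omega>)\<^sup>2)"
    and "expectation (\<lambda>\<omega>. (\<Sum>i\<in>J. T i \<omega>)\<^sup>2) = (\<Sum>i\<in>J. expectation (\<lambda>\<omega>. (T i \<omega>)\<^sup>2))"
proof -
  have square: "(\<lambda>\<omega>. (\<Sum>i\<in>J. T i \<omega>)\<^sup>2) = (\<lambda>\<omega>. \<Sum>i\<in>J. \<Sum>j\<in>J. T i \<omega> * T j \<omega>)"
    by (simp add: power2_eq_square sum_product)
  show "integrable M (\<lambda>\<omega>. (\<Sum>i\<in>J. T i \<omega>)\<^sup>2)"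
    unfolding square using int by auto
  have "expectation (\<lambda>\<omega>. (\<Sum>i\<in>J. T i \<omega>)\<^sup>2) = (\<Sum>i\<in>J. \<Sum>j\<in>J. expectation (\<lambda>\<omega>. T i \<omega> * T j \<omega>))"
    unfolding square using int by (simp add: Bochner_Integration.integral_sum)
  also have "\<dots> = (\<Sum>i\<in>J. expectation (\<lambda>\<omega>. T i \<omega> * T i \<omega>))"
    using orth \<open>finite J\<close> by (intro sum.cong refl) (auto simp: sum.remove intro!: sum.neutral)
  finally show "expectation (\<lambda>\<omega>. (\<Sum>i\<in>J. T i \<omega>)\<^sup>2) = (\<Sum>i\<in>J. expectation (\<lambda>\<omega>. (T i \<omega>)\<^sup>2))"
    by (simp add: power2_eq_square)
qed

section \<open>Functions of disjoint blocks of an independent family\<close>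

definition block_measurable :: "'i set \<Rightarrow> (('i \<Rightarrow> real) \<Rightarrow> real) \<Rightarrow> bool" where
  "block_measurable A f \<longleftrightarrow>
     f \<in> borel_measurable (PiM A (\<lambda>_. borel)) \<and> (\<forall>x. f (restrict x A) = f x)"

lemma block_measurableI:
  "f \<in> borel_measurable (PiM A (\<lambda>_. borel)) \<Longrightarrow> (\<And>x. f (restrict x A) = f x) \<Longrightarrow> block_measurable A f"
  unfolding block_measurable_def by blast

lemma block_measurable_mono:
  assumes f: "block_measurable A f" and "A \<subseteq> B"
  shows "block_measurable B f"
proof (rule block_measurableI)
  have "f = (\<lambda>x. f (restrict x A))"
    using f by (simp add: block_measurable_def)
  also have "\<dots> \<in> borel_measurable (PiM B (\<lambda>_. borel))"
    by (rule measurable_compose[OF measurable_restrict_subset[OF \<open>A \<subseteq> B\<close>]])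
      (use f in \<open>simp add: block_measurable_def\<close>)
  finally show "f \<in> borel_measurable (PiM B (\<lambda>_. borel))" .
  fix x
  have "f (restrict x B) = f (restrict (restrict x B) A)"
    using f unfolding block_measurable_def by metis
  also have "restrict (restrict x B) A = restrict x A"
    using \<open>A \<subseteq> B\<close> by (simp add: Int_absorb1)
  finally show "f (restrict x B) = f x"
    using f unfolding block_measurable_def by metis
qed

lemma block_measurable_mult:
  assumes "block_measurable A f" "block_measurable A g"
  shows "block_measurable A (\<lambda>x. f x * g x)"
  using assms unfolding block_measurable_def by auto

lemma (in prob_space) indep_var_block_measurable:
  assumes indep: "indep_vars (\<lambda>_. borel) X I" and "A \<inter> B = {}" "A \<subseteq> I" "B \<subseteq> I"
    and f: "block_measurable A f" and g: "block_measurable B g"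
  shows "indep_var borel (\<lambda>\<omega>. f (\<lambda>i. X i \<omega>)) borel (\<lambda>\<omega>. g (\<lambda>i. X i \<omega>))"
proof -
  have "indep_var borel (f \<circ> (\<lambda>\<omega>. restrict (\<lambda>i. X i \<omega>) A)) borel (g \<circ> (\<lambda>\<omega>. restrict (\<lambda>i. X i \<omega>) B))"
    using indep_var_restrict[OF indep assms(2-4)] f g
    by (intro indep_var_compose) (auto simp: block_measurable_def)
  then show ?thesis
    using f g by (simp add: comp_def block_measurable_def)
qed

lemma (in prob_space) block_measurable_random_variable:
  assumes "block_measurable A f" "\<And>i. i \<in> A \<Longrightarrow> X i \<in> borel_measurable M"
  shows "(\<lambda>\<omega>. f (\<lambda>i. X i \<omega>)) \<in> borel_measurable M"
proof -
  have "(\<lambda>\<omega>. f (restrict (\<lambda>i. X i \<omega>) A)) \<in> borel_measurable M"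
    using assms by (intro measurable_compose[OF measurable_restrict]) (auto simp: block_measurable_def)
  then show ?thesis
    using assms(1) by (simp add: block_measurable_def)
qed

lemma all_rvs_simps [simp]:
  "all_rvs Y U ZPD Zimp (IdxY i) = Y i" "all_rvs Y U ZPD Zimp (IdxU d) = U d"
  "all_rvs Y U ZPD Zimp (IdxZPD d) = ZPD d" "all_rvs Y U ZPD Zimp (IdxZimp i d) = Zimp i d"
  by (simp_all add: all_rvs_def)

text \<open>
  Applied to the coordinate families \<open>\<lambda>i x. x (IdxY i)\<close>, ..., each statistic of the
  procedure becomes a function of the sample vector \<open>\<lambda>j. all_rvs Y U ZPD Zimp j \<omega>\<close>.
\<close>

lemma ybar_obs_coordinates [simp]:
  "ybar_obs n (\<lambda>i x. x (IdxY i)) (\<lambda>j. all_rvs Y U ZPD Zimp j \<omega>) = ybar_obs n Y \<omega>"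
  by (simp add: ybar_obs_def)

lemma CSS_coordinates [simp]:
  "CSS n (\<lambda>i x. x (IdxY i)) (\<lambda>j. all_rvs Y U ZPD Zimp j \<omega>) = CSS n Y \<omega>"
  by (simp add: CSS_def)

lemma sigma_hat_coordinates [simp]:
  "sigma_hat n (\<lambda>i x. x (IdxY i)) (\<lambda>d x. x (IdxU d)) d (\<lambda>j. all_rvs Y U ZPD Zimp j \<omega>)
    = sigma_hat n Y U d \<omega>"
  by (simp add: sigma_hat_def)

lemma imputation_noise_coordinates [simp]:
  "imputation_noise n m (\<lambda>d x. x (IdxZPD d)) (\<lambda>i d x. x (IdxZimp i d)) d
     (\<lambda>j. all_rvs Y U ZPD Zimp j \<omega>) = imputation_noise n m ZPD Zimp d \<omega>"
  by (simp add: imputation_noise_def)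

lemma block_measurable_ybar_obs_centred:
  "block_measurable (IdxY ` {..<n}) (\<lambda>x. ybar_obs n (\<lambda>i x. x (IdxY i)) x - c)"
proof (rule block_measurableI)
  show "(\<lambda>x. ybar_obs n (\<lambda>i x. x (IdxY i)) x - c) \<in> borel_measurable (PiM (IdxY ` {..<n}) (\<lambda>_. borel))"
    unfolding ybar_obs_def by measurable
qed (auto simp: ybar_obs_def intro!: sum.cong)

lemma block_measurable_CSS: "block_measurable (IdxY ` {..<n}) (CSS n (\<lambda>i x. x (IdxY i)))"
proof (rule block_measurableI)
  show "CSS n (\<lambda>i x. x (IdxY i)) \<in> borel_measurable (PiM (IdxY ` {..<n}) (\<lambda>_. borel))"
    unfolding CSS_def[abs_def] ybar_obs_def by measurable
qed (auto simp: CSS_def ybar_obs_def intro!: sum.cong)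

lemma block_measurable_sigma_hat:
  "block_measurable (insert (IdxU d) (IdxY ` {..<n})) (sigma_hat n (\<lambda>i x. x (IdxY i)) (\<lambda>d x. x (IdxU d)) d)"
proof (rule block_measurableI)
  show "sigma_hat n (\<lambda>i x. x (IdxY i)) (\<lambda>d x. x (IdxU d)) d
      \<in> borel_measurable (PiM (insert (IdxU d) (IdxY ` {..<n})) (\<lambda>_. borel))"
    unfolding sigma_hat_def[abs_def] CSS_def ybar_obs_def by measurable
qed (auto simp: sigma_hat_def CSS_def ybar_obs_def intro!: sum.cong)

lemma block_measurable_inverse_abs: "block_measurable {i} (\<lambda>x. 1 / \<bar>x i\<bar>)"
  by (rule block_measurableI) auto

lemma block_measurable_imputation_noise:
  "block_measurable (insert (IdxZPD d) ((\<lambda>i. IdxZimp i d) ` {..<m}))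
     (imputation_noise n m (\<lambda>d x. x (IdxZPD d)) (\<lambda>i d x. x (IdxZimp i d)) d)"
proof (rule block_measurableI)
  show "imputation_noise n m (\<lambda>d x. x (IdxZPD d)) (\<lambda>i d x. x (IdxZimp i d)) d
      \<in> borel_measurable (PiM (insert (IdxZPD d) ((\<lambda>i. IdxZimp i d) ` {..<m})) (\<lambda>_. borel))"
    unfolding imputation_noise_def[abs_def] by measurable
qed (auto simp: imputation_noise_def intro!: sum.cong)

section \<open>The imputation model\<close>

locale imputation_model = prob_space M for M :: "'a measure" +
  fixes n_obs n_mis D :: nat and \<mu> \<sigma> \<nu>_prior :: real
    and Y U ZPD :: "nat \<Rightarrow> 'a \<Rightarrow> real" and Zimp :: "nat \<Rightarrow> nat \<Rightarrow> 'a \<Rightarrow> real"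
  assumes n_obs_pos: "n_obs > 0" and n_mis_pos: "n_mis > 0" and D_pos: "D > 0"
    and \<sigma>_pos: "\<sigma> > 0" and \<nu>_prior: "real n_obs + \<nu>_prior > 3"
    and Y: "\<And>i. i < n_obs \<Longrightarrow> distributed M lborel (Y i) (normal_density \<mu> \<sigma>)"
    and U: "\<And>d. d < D \<Longrightarrow> distributed M lborel (U d) (chi2_density (\<nu>_prior + real n_obs - 1))"
    and ZPD: "\<And>d. d < D \<Longrightarrow> distributed M lborel (ZPD d) (normal_density 0 (1 / sqrt (real n_obs)))"
    and Zimp: "\<And>i d. i < n_mis \<Longrightarrow> d < D \<Longrightarrow> distributed M lborel (Zimp i d) std_normal_density"
    and indep: "indep_vars (\<lambda>_. borel) (all_rvs Y U ZPD Zimp) (rv_index_set n_obs n_mis D)"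
begin

abbreviation "X \<equiv> all_rvs Y U ZPD Zimp"
abbreviation "I \<equiv> rv_index_set n_obs n_mis D"
abbreviation "obs_block \<equiv> IdxY ` {..<n_obs}"
abbreviation "noise_block d \<equiv> insert (IdxZPD d) ((\<lambda>i. IdxZimp i d) ` {..<n_mis})"
abbreviation "sigma_hat_coord d \<equiv> sigma_hat n_obs (\<lambda>i x. x (IdxY i)) (\<lambda>d x. x (IdxU d)) d"
abbreviation "noise_coord d \<equiv> imputation_noise n_obs n_mis (\<lambda>d x. x (IdxZPD d)) (\<lambda>i d x. x (IdxZimp i d)) d"
abbreviation "imputation_term d \<omega> \<equiv> sigma_hat n_obs Y U d \<omega> * imputation_noise n_obs n_mis ZPD Zimp d \<omega>"

lemma X_measurable: "i \<in> I \<Longrightarrow> X i \<in> borel_measurable M"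
  using indep by (auto simp: indep_vars_def)

lemma blocks_in_I:
  "obs_block \<subseteq> I" "d < D \<Longrightarrow> IdxU d \<in> I" "d < D \<Longrightarrow> noise_block d \<subseteq> I"
  by (auto simp: rv_index_set_def)

lemma ybar_obs_normal:
  "distributed M lborel (ybar_obs n_obs Y) (normal_density \<mu> (\<sigma> / sqrt (real n_obs)))"
proof -
  have "distributed M lborel (\<lambda>\<omega>. \<Sum>j\<in>obs_block. 1 / real n_obs * X j \<omega>)
      (normal_density (\<Sum>j\<in>obs_block. 1 / real n_obs * \<mu>) (sqrt (\<Sum>j\<in>obs_block. (1 / real n_obs * \<sigma>)\<^sup>2)))"
    using n_obs_pos \<sigma>_pos Y blocks_in_I
    by (intro weighted_sum_indep_normal indep_vars_subset[OF indep]) auto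
  moreover have "(\<lambda>\<omega>. \<Sum>j\<in>obs_block. 1 / real n_obs * X j \<omega>) = ybar_obs n_obs Y"
    by (simp add: fun_eq_iff sum.reindex inj_on_def ybar_obs_def sum_divide_distrib)
  moreover have "sqrt (\<Sum>j\<in>obs_block. (1 / real n_obs * \<sigma>)\<^sup>2) = \<sigma> / sqrt (real n_obs)"
  proof -
    have "(\<Sum>j\<in>obs_block. (1 / real n_obs * \<sigma>)\<^sup>2) = (\<sigma> / sqrt (real n_obs))\<^sup>2"
      using n_obs_pos by (simp add: card_image inj_on_def power_divide power2_eq_square)
    then show ?thesis
      using \<sigma>_pos by simp
  qed
  ultimately show ?thesis
    using n_obs_pos by (simp add: card_image inj_on_def)
qed

lemma imputation_noise_normal:
  assumes "d < D"
  shows "distributed M lborel (imputation_noise n_obs n_mis ZPD Zimp d)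
           (normal_density 0 (sqrt (real n_mis / (real n_obs * real (n_obs + n_mis)))))"
proof -
  define N where "N = real (n_obs + n_mis)"
  define c where "c j = (case j of IdxZPD _ \<Rightarrow> real n_mis / N | _ \<Rightarrow> 1 / N)" for j
  define s where "s j = (case j of IdxZPD _ \<Rightarrow> 1 / sqrt (real n_obs) | _ \<Rightarrow> 1)" for j
  have N: "N > 0"
    using n_obs_pos by (simp add: N_def)
  have "distributed M lborel (\<lambda>\<omega>. \<Sum>j\<in>noise_block d. c j * X j \<omega>)
      (normal_density (\<Sum>j\<in>noise_block d. c j * 0) (sqrt (\<Sum>j\<in>noise_block d. (c j * s j)\<^sup>2)))"
    using assms N n_obs_pos n_mis_pos ZPD Zimp blocks_in_I
    by (intro weighted_sum_indep_normal indep_vars_subset[OF indep]) (auto simp: c_def s_def)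
  moreover have "(\<lambda>\<omega>. \<Sum>j\<in>noise_block d. c j * X j \<omega>) = imputation_noise n_obs n_mis ZPD Zimp d"
  proof
    fix \<omega>
    have "(\<Sum>j\<in>noise_block d. c j * X j \<omega>)
        = real n_mis / N * ZPD d \<omega> + (\<Sum>i<n_mis. 1 / N * Zimp i d \<omega>)"
      by (subst sum.insert) (auto simp: sum.reindex inj_on_def c_def)
    then show "(\<Sum>j\<in>noise_block d. c j * X j \<omega>) = imputation_noise n_obs n_mis ZPD Zimp d \<omega>"
      by (simp add: imputation_noise_def N_def sum_divide_distrib add_divide_distrib)
  qed
  moreover have "(\<Sum>j\<in>noise_block d. (c j * s j)\<^sup>2) = real n_mis / (real n_obs * N)"
  proof -
    have "(\<Sum>j\<in>noise_block d. (c j * s j)\<^sup>2) = (real n_mis / N)\<^sup>2 / real n_obs + real n_mis / N\<^sup>2"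
      using n_obs_pos
      by (subst sum.insert) (auto simp: sum.reindex inj_on_def c_def s_def power_mult_distrib power_divide)
    also have "\<dots> = real n_mis * (real n_obs + real n_mis) / (real n_obs * N * N)"
      using N n_obs_pos by (simp add: field_simps power2_eq_square)
    also have "real n_obs + real n_mis = N"
      by (simp add: N_def)
    finally show ?thesis
      using N by simp
  qed
  ultimately show ?thesis
    by (simp add: N_def)
qed

lemma ybar_obs_moments:
  "integrable M (\<lambda>\<omega>. (ybar_obs n_obs Y \<omega> - \<mu>)\<^sup>2)" "integrable M (ybar_obs n_obs Y)"
  "expectation (ybar_obs n_obs Y) = \<mu>"
  "expectation (\<lambda>\<omega>. (ybar_obs n_obs Y \<omega> - \<mu>)\<^sup>2) = \<sigma>\<^sup>2 / real n_obs"
  using normal_distributed_moments[OF _ ybar_obs_normal] \<sigma>_pos n_obs_pos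
  by (simp_all add: power_divide)

lemma imputation_noise_moments:
  assumes "d < D"
  shows "integrable M (\<lambda>\<omega>. (imputation_noise n_obs n_mis ZPD Zimp d \<omega>)\<^sup>2)"
    and "integrable M (imputation_noise n_obs n_mis ZPD Zimp d)"
    and "expectation (imputation_noise n_obs n_mis ZPD Zimp d) = 0"
    and "expectation (\<lambda>\<omega>. (imputation_noise n_obs n_mis ZPD Zimp d \<omega>)\<^sup>2)
           = real n_mis / (real n_obs * real (n_obs + n_mis))"
  using normal_distributed_moments[OF _ imputation_noise_normal[OF assms]] n_obs_pos n_mis_pos
  by simp_all

lemma CSS_moments:
  "integrable M (CSS n_obs Y)" "expectation (CSS n_obs Y) = (real n_obs - 1) * \<sigma>\<^sup>2"
proof -
  have CSS: "CSS n_obs Y = (\<lambda>\<omega>. (\<Sum>i<n_obs. (Y i \<omega> - \<mu>)\<^sup>2) - real n_obs * (ybar_obs n_obs Y \<omega> - \<mu>)\<^sup>2)"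
    using n_obs_pos by (simp add: fun_eq_iff CSS_eq_centred)
  have Y_int: "integrable M (\<lambda>\<omega>. (Y i \<omega> - \<mu>)\<^sup>2)"
    and Y_var: "expectation (\<lambda>\<omega>. (Y i \<omega> - \<mu>)\<^sup>2) = \<sigma>\<^sup>2" if "i < n_obs" for i
    using normal_distributed_moments[OF \<sigma>_pos Y[OF that]] by simp_all
  show "integrable M (CSS n_obs Y)"
    unfolding CSS
    by (intro Bochner_Integration.integrable_diff Bochner_Integration.integrable_sum
        integrable_mult_right Y_int ybar_obs_moments(1)) auto
  have "expectation (CSS n_obs Y) = (\<Sum>i<n_obs. expectation (\<lambda>\<omega>. (Y i \<omega> - \<mu>)\<^sup>2))
      - real n_obs * expectation (\<lambda>\<omega>. (ybar_obs n_obs Y \<omega> - \<mu>)\<^sup>2)"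
    unfolding CSS using Y_int ybar_obs_moments(1)
    by (subst Bochner_Integration.integral_diff)
      (auto intro!: Bochner_Integration.integrable_sum simp: Bochner_Integration.integral_sum)
  then show "expectation (CSS n_obs Y) = (real n_obs - 1) * \<sigma>\<^sup>2"
    using Y_var ybar_obs_moments(4) n_obs_pos by (simp add: algebra_simps)
qed

lemma sigma_hat_measurable: "d < D \<Longrightarrow> sigma_hat n_obs Y U d \<in> borel_measurable M"
  using block_measurable_random_variable[OF block_measurable_sigma_hat, of d n_obs X]
    X_measurable blocks_in_I by auto

lemma sigma_hat_second_moment:
  assumes "d < D"
  shows "integrable M (\<lambda>\<omega>. (sigma_hat n_obs Y U d \<omega>)\<^sup>2)"
    and "expectation (\<lambda>\<omega>. (sigma_hat n_obs Y U d \<omega>)\<^sup>2)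
           = (real n_obs - 1) * \<sigma>\<^sup>2 / (real n_obs + \<nu>_prior - 3)"
proof -
  have "indep_var borel (\<lambda>\<omega>. CSS n_obs (\<lambda>i x. x (IdxY i)) (\<lambda>j. X j \<omega>))
      borel (\<lambda>\<omega>. 1 / \<bar>(\<lambda>j. X j \<omega>) (IdxU d)\<bar>)"
    using blocks_in_I assms
    by (intro indep_var_block_measurable[OF indep _ _ _ block_measurable_CSS block_measurable_inverse_abs])
      auto
  then have indep_CSS_U: "indep_var borel (CSS n_obs Y) borel (\<lambda>\<omega>. 1 / \<bar>U d \<omega>\<bar>)"
    by simp
  have U_int: "integrable M (\<lambda>\<omega>. 1 / \<bar>U d \<omega>\<bar>)"
    and U_inv: "expectation (\<lambda>\<omega>. 1 / \<bar>U d \<omega>\<bar>) = 1 / (real n_obs + \<nu>_prior - 3)"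
    using chi2_distributed_inverse_moment[OF U[OF assms]] \<nu>_prior by (simp_all add: algebra_simps)
  show "integrable M (\<lambda>\<omega>. (sigma_hat n_obs Y U d \<omega>)\<^sup>2)"
    unfolding sigma_hat_square by (rule indep_var_integrable[OF indep_CSS_U CSS_moments(1) U_int])
  show "expectation (\<lambda>\<omega>. (sigma_hat n_obs Y U d \<omega>)\<^sup>2)
      = (real n_obs - 1) * \<sigma>\<^sup>2 / (real n_obs + \<nu>_prior - 3)"
    unfolding sigma_hat_square indep_var_lebesgue_integral[OF indep_CSS_U CSS_moments(1) U_int]
    by (simp add: CSS_moments(2) U_inv)
qed

lemma noise_orthogonal:
  assumes d: "d < D" and f: "block_measurable (I - noise_block d) f"
    and int: "integrable M (\<lambda>\<omega>. f (\<lambda>j. X j \<omega>))"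
  shows "integrable M (\<lambda>\<omega>. f (\<lambda>j. X j \<omega>) * imputation_noise n_obs n_mis ZPD Zimp d \<omega>)"
    and "expectation (\<lambda>\<omega>. f (\<lambda>j. X j \<omega>) * imputation_noise n_obs n_mis ZPD Zimp d \<omega>) = 0"
proof -
  have "indep_var borel (\<lambda>\<omega>. f (\<lambda>j. X j \<omega>)) borel (\<lambda>\<omega>. noise_coord d (\<lambda>j. X j \<omega>))"
    using blocks_in_I d
    by (intro indep_var_block_measurable[OF indep _ _ _ f block_measurable_imputation_noise]) auto
  then have indep_W: "indep_var borel (\<lambda>\<omega>. f (\<lambda>j. X j \<omega>)) borel (imputation_noise n_obs n_mis ZPD Zimp d)"
    by simp
  show "integrable M (\<lambda>\<omega>. f (\<lambda>j. X j \<omega>) * imputation_noise n_obs n_mis ZPD Zimp d \<omega>)"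
    by (rule indep_var_integrable[OF indep_W int imputation_noise_moments(2)[OF d]])
  show "expectation (\<lambda>\<omega>. f (\<lambda>j. X j \<omega>) * imputation_noise n_obs n_mis ZPD Zimp d \<omega>) = 0"
    by (simp add: indep_var_lebesgue_integral[OF indep_W int imputation_noise_moments(2)[OF d]]
        imputation_noise_moments(3)[OF d])
qed

lemma noise_second_moment:
  assumes d: "d < D" and f: "block_measurable (I - noise_block d) f"
    and int: "integrable M (\<lambda>\<omega>. f (\<lambda>j. X j \<omega>))"
  shows "integrable M (\<lambda>\<omega>. f (\<lambda>j. X j \<omega>) * (imputation_noise n_obs n_mis ZPD Zimp d \<omega>)\<^sup>2)"
    and "expectation (\<lambda>\<omega>. f (\<lambda>j. X j \<omega>) * (imputation_noise n_obs n_mis ZPD Zimp d \<omega>)\<^sup>2)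
           = expectation (\<lambda>\<omega>. f (\<lambda>j. X j \<omega>)) * (real n_mis / (real n_obs * real (n_obs + n_mis)))"
proof -
  have "indep_var borel (\<lambda>\<omega>. f (\<lambda>j. X j \<omega>)) borel
      (\<lambda>\<omega>. noise_coord d (\<lambda>j. X j \<omega>) * noise_coord d (\<lambda>j. X j \<omega>))"
    using blocks_in_I d
    by (intro indep_var_block_measurable[OF indep _ _ _ f
        block_measurable_mult[OF block_measurable_imputation_noise block_measurable_imputation_noise]])
      auto
  then have indep_W: "indep_var borel (\<lambda>\<omega>. f (\<lambda>j. X j \<omega>)) borel
      (\<lambda>\<omega>. (imputation_noise n_obs n_mis ZPD Zimp d \<omega>)\<^sup>2)"
    by (simp add: power2_eq_square)
  show "integrable M (\<lambda>\<omega>. f (\<lambda>j. X j \<omega>) * (imputation_noise n_obs n_mis ZPD Zimp d \<omega>)\<^sup>2)"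
    by (rule indep_var_integrable[OF indep_W int imputation_noise_moments(1)[OF d]])
  show "expectation (\<lambda>\<omega>. f (\<lambda>j. X j \<omega>) * (imputation_noise n_obs n_mis ZPD Zimp d \<omega>)\<^sup>2)
      = expectation (\<lambda>\<omega>. f (\<lambda>j. X j \<omega>)) * (real n_mis / (real n_obs * real (n_obs + n_mis)))"
    by (simp add: indep_var_lebesgue_integral[OF indep_W int imputation_noise_moments(1)[OF d]]
        imputation_noise_moments(4)[OF d])
qed

lemma sigma_hat_integrable: "d < D \<Longrightarrow> integrable M (sigma_hat n_obs Y U d)"
  using sigma_hat_measurable sigma_hat_second_moment(1) by (rule square_integrable_imp_integrable)

lemma sigma_hat_coord_outside_noise:
  "d < D \<Longrightarrow> block_measurable (I - noise_block d') (sigma_hat_coord d)"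
  using blocks_in_I by (intro block_measurable_mono[OF block_measurable_sigma_hat]) auto

lemma imputation_term_mean:
  assumes "d < D"
  shows "integrable M (imputation_term d)" and "expectation (imputation_term d) = 0"
  using noise_orthogonal[OF assms sigma_hat_coord_outside_noise[OF assms]] sigma_hat_integrable[OF assms]
  by simp_all

lemma imputation_term_second_moment:
  assumes "d < D"
  shows "integrable M (\<lambda>\<omega>. (imputation_term d \<omega>)\<^sup>2)"
    and "expectation (\<lambda>\<omega>. (imputation_term d \<omega>)\<^sup>2) = (real n_obs - 1) * \<sigma>\<^sup>2 / (real n_obs + \<nu>_prior - 3)
           * (real n_mis / (real n_obs * real (n_obs + n_mis)))"
  using noise_second_moment[OF assms block_measurable_mult[OF sigma_hat_coord_outside_noise[OF assms]
      sigma_hat_coord_outside_noise[OF assms]]] sigma_hat_second_moment[OF assms]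
  by (simp_all add: power2_eq_square ac_simps)

lemma imputation_term_orthogonal_ybar_obs:
  assumes "d < D"
  shows "integrable M (\<lambda>\<omega>. (ybar_obs n_obs Y \<omega> - \<mu>) * imputation_term d \<omega>)"
    and "expectation (\<lambda>\<omega>. (ybar_obs n_obs Y \<omega> - \<mu>) * imputation_term d \<omega>) = 0"
proof -
  have f: "block_measurable (I - noise_block d) (\<lambda>x. (ybar_obs n_obs (\<lambda>i x. x (IdxY i)) x - \<mu>) * sigma_hat_coord d x)"
    using blocks_in_I
    by (intro block_measurable_mult sigma_hat_coord_outside_noise[OF assms]
        block_measurable_mono[OF block_measurable_ybar_obs_centred]) auto
  have "integrable M (\<lambda>\<omega>. (ybar_obs n_obs Y \<omega> - \<mu>) * sigma_hat n_obs Y U d \<omega>)"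
    using distributed_measurable[OF ybar_obs_normal] sigma_hat_measurable[OF assms]
      ybar_obs_moments(1) sigma_hat_second_moment(1)[OF assms]
    by (intro integrable_mult_of_square_integrable) auto
  then show "integrable M (\<lambda>\<omega>. (ybar_obs n_obs Y \<omega> - \<mu>) * imputation_term d \<omega>)"
    and "expectation (\<lambda>\<omega>. (ybar_obs n_obs Y \<omega> - \<mu>) * imputation_term d \<omega>) = 0"
    using noise_orthogonal[OF assms f] by (simp_all add: mult.assoc)
qed

lemma imputation_terms_orthogonal:
  assumes "d < D" "d' < D" "d \<noteq> d'"
  shows "integrable M (\<lambda>\<omega>. imputation_term d \<omega> * imputation_term d' \<omega>)"
    and "expectation (\<lambda>\<omega>. imputation_term d \<omega> * imputation_term d' \<omega>) = 0"
proof -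
  have sigmas: "block_measurable (I - noise_block d') (\<lambda>x. sigma_hat_coord d x * sigma_hat_coord d' x)"
    using assms by (intro block_measurable_mult sigma_hat_coord_outside_noise)
  have "integrable M (\<lambda>\<omega>. sigma_hat n_obs Y U d \<omega> * sigma_hat n_obs Y U d' \<omega>)"
    using assms sigma_hat_measurable sigma_hat_second_moment(1)
    by (intro integrable_mult_of_square_integrable) auto
  then have int: "integrable M (\<lambda>\<omega>. sigma_hat n_obs Y U d \<omega> * sigma_hat n_obs Y U d' \<omega>
      * imputation_noise n_obs n_mis ZPD Zimp d' \<omega>)"
    using noise_orthogonal(1)[OF assms(2) sigmas] by simp
  have "block_measurable (I - noise_block d)
      (\<lambda>x. sigma_hat_coord d x * sigma_hat_coord d' x * noise_coord d' x)"
    using assms blocks_in_I(3)[OF assms(2)]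
    by (intro block_measurable_mult sigma_hat_coord_outside_noise
        block_measurable_mono[OF block_measurable_imputation_noise]) auto
  from noise_orthogonal[OF assms(1) this] int
  show "integrable M (\<lambda>\<omega>. imputation_term d \<omega> * imputation_term d' \<omega>)"
    and "expectation (\<lambda>\<omega>. imputation_term d \<omega> * imputation_term d' \<omega>) = 0"
    by (simp_all add: ac_simps)
qed

definition imputation_average :: "'a \<Rightarrow> real" where
  "imputation_average \<omega> = (\<Sum>d<D. imputation_term d \<omega>) / real D"

lemma imputation_average_moments:
  shows "integrable M imputation_average"
    and "expectation imputation_average = 0"
    and "integrable M (\<lambda>\<omega>. (imputation_average \<omega>)\<^sup>2)"
    and "expectation (\<lambda>\<omega>. (imputation_average \<omega>)\<^sup>2)
           = (real n_obs - 1) * \<sigma>\<^sup>2 / (real n_obs + \<nu>_prior - 3)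
             * (real n_mis / (real n_obs * real (n_obs + n_mis))) / real D"
    and "integrable M (\<lambda>\<omega>. (ybar_obs n_obs Y \<omega> - \<mu>) * imputation_average \<omega>)"
    and "expectation (\<lambda>\<omega>. (ybar_obs n_obs Y \<omega> - \<mu>) * imputation_average \<omega>) = 0"
proof -
  have products: "integrable M (\<lambda>\<omega>. imputation_term d \<omega> * imputation_term d' \<omega>)"
    if "d \<in> {..<D}" "d' \<in> {..<D}" for d d'
    using that imputation_terms_orthogonal(1) imputation_term_second_moment(1)
    by (cases "d = d'") (auto simp: power2_eq_square)
  have orthogonal: "expectation (\<lambda>\<omega>. imputation_term d \<omega> * imputation_term d' \<omega>) = 0"
    if "d \<in> {..<D}" "d' \<in> {..<D}" "d \<noteq> d'" for d d'
    using that imputation_terms_orthogonal(2) by simp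
  note sum_square = expectation_square_sum_orthogonal[OF finite_lessThan products orthogonal]
  have "integrable M (\<lambda>\<omega>. \<Sum>d<D. imputation_term d \<omega>)"
    using imputation_term_mean(1) by (intro Bochner_Integration.integrable_sum) simp
  then show "integrable M imputation_average"
    unfolding imputation_average_def by (rule integrable_divide)
  show "expectation imputation_average = 0"
    using imputation_term_mean
    by (simp add: imputation_average_def[abs_def] Bochner_Integration.integral_sum)
  have average_square: "(\<lambda>\<omega>. (imputation_average \<omega>)\<^sup>2) = (\<lambda>\<omega>. (\<Sum>d<D. imputation_term d \<omega>)\<^sup>2 / (real D)\<^sup>2)"
    by (simp add: imputation_average_def power_divide)
  show "integrable M (\<lambda>\<omega>. (imputation_average \<omega>)\<^sup>2)"
    unfolding average_square by (rule integrable_divide[OF sum_square(1)])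
  have "expectation (\<lambda>\<omega>. (imputation_average \<omega>)\<^sup>2) = (\<Sum>d<D. expectation (\<lambda>\<omega>. (imputation_term d \<omega>)\<^sup>2)) / (real D)\<^sup>2"
    unfolding average_square using sum_square(2) by simp
  also have "\<dots> = (real n_obs - 1) * \<sigma>\<^sup>2 / (real n_obs + \<nu>_prior - 3)
      * (real n_mis / (real n_obs * real (n_obs + n_mis))) / real D"
    using D_pos by (simp add: imputation_term_second_moment(2) power2_eq_square[of "real D"])
  finally show "expectation (\<lambda>\<omega>. (imputation_average \<omega>)\<^sup>2) = (real n_obs - 1) * \<sigma>\<^sup>2 / (real n_obs + \<nu>_prior - 3)
      * (real n_mis / (real n_obs * real (n_obs + n_mis))) / real D" .
  have cross: "(\<lambda>\<omega>. (ybar_obs n_obs Y \<omega> - \<mu>) * imputation_average \<omega>)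
      = (\<lambda>\<omega>. (\<Sum>d<D. (ybar_obs n_obs Y \<omega> - \<mu>) * imputation_term d \<omega>) / real D)"
    by (simp add: imputation_average_def sum_distrib_left)
  have "integrable M (\<lambda>\<omega>. \<Sum>d<D. (ybar_obs n_obs Y \<omega> - \<mu>) * imputation_term d \<omega>)"
    using imputation_term_orthogonal_ybar_obs(1) by (intro Bochner_Integration.integrable_sum) simp
  then show "integrable M (\<lambda>\<omega>. (ybar_obs n_obs Y \<omega> - \<mu>) * imputation_average \<omega>)"
    unfolding cross by (rule integrable_divide)
  show "expectation (\<lambda>\<omega>. (ybar_obs n_obs Y \<omega> - \<mu>) * imputation_average \<omega>) = 0"
    unfolding cross using imputation_term_orthogonal_ybar_obs
    by (simp add: Bochner_Integration.integral_sum)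
qed

lemma deviation_second_moment:
  shows "integrable M (\<lambda>\<omega>. (ybar_obs n_obs Y \<omega> - \<mu> + imputation_average \<omega>)\<^sup>2)"
    and "expectation (\<lambda>\<omega>. (ybar_obs n_obs Y \<omega> - \<mu> + imputation_average \<omega>)\<^sup>2) =
        \<sigma>\<^sup>2 / real n_obs *
        (1 + real n_mis * (real n_obs - 1) /
             (real D * real (n_obs + n_mis) * (real n_obs + \<nu>_prior - 3)))"
proof -
  define A where "A \<omega> = ybar_obs n_obs Y \<omega> - \<mu>" for \<omega>
  note B = imputation_average_moments[folded A_def]
  have A: "integrable M (\<lambda>\<omega>. (A \<omega>)\<^sup>2)" "expectation (\<lambda>\<omega>. (A \<omega>)\<^sup>2) = \<sigma>\<^sup>2 / real n_obs"
    using ybar_obs_moments by (simp_all add: A_def)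
  have square: "(\<lambda>\<omega>. (A \<omega> + imputation_average \<omega>)\<^sup>2)
      = (\<lambda>\<omega>. (A \<omega>)\<^sup>2 + 2 * (A \<omega> * imputation_average \<omega>) + (imputation_average \<omega>)\<^sup>2)"
    by (simp add: fun_eq_iff power2_sum)
  show "integrable M (\<lambda>\<omega>. (ybar_obs n_obs Y \<omega> - \<mu> + imputation_average \<omega>)\<^sup>2)"
    using A B by (simp add: A_def[symmetric] square)
  have "expectation (\<lambda>\<omega>. (A \<omega> + imputation_average \<omega>)\<^sup>2) = \<sigma>\<^sup>2 / real n_obs
      + (real n_obs - 1) * \<sigma>\<^sup>2 / (real n_obs + \<nu>_prior - 3)
        * (real n_mis / (real n_obs * real (n_obs + n_mis))) / real D"
    unfolding square using A B by simp
  also have "\<dots> = \<sigma>\<^sup>2 / real n_obs * (1 + real n_mis * (real n_obs - 1) /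
             (real D * real (n_obs + n_mis) * (real n_obs + \<nu>_prior - 3)))"
  proof -
    define q N where "q = real n_obs + \<nu>_prior - 3" and "N = real (n_obs + n_mis)"
    have "q > 0" "N > 0"
      using \<nu>_prior n_obs_pos by (simp_all add: q_def N_def)
    then show ?thesis
      unfolding q_def[symmetric] N_def[symmetric] using n_obs_pos D_pos by (simp add: field_simps)
  qed
  finally show "expectation (\<lambda>\<omega>. (ybar_obs n_obs Y \<omega> - \<mu> + imputation_average \<omega>)\<^sup>2) = \<dots>"
    by (simp add: A_def)
qed

theorem mu_MI_PD_moments:
  "integrable M (mu_MI_PD n_obs n_mis D Y U ZPD Zimp)
    \<and> integrable M (\<lambda>\<omega>. (mu_MI_PD n_obs n_mis D Y U ZPD Zimp \<omega>)\<^sup>2)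
    \<and> expectation (mu_MI_PD n_obs n_mis D Y U ZPD Zimp) = \<mu>
    \<and> variance (mu_MI_PD n_obs n_mis D Y U ZPD Zimp) =
        \<sigma>\<^sup>2 / real n_obs *
        (1 + real n_mis * (real n_obs - 1) /
             (real D * real (n_obs + n_mis) * (real n_obs + \<nu>_prior - 3)))"
proof -
  define \<Delta> where "\<Delta> \<omega> = ybar_obs n_obs Y \<omega> - \<mu> + imputation_average \<omega>" for \<omega>
  have mu: "mu_MI_PD n_obs n_mis D Y U ZPD Zimp = (\<lambda>\<omega>. \<mu> + \<Delta> \<omega>)"
    using n_obs_pos D_pos by (simp add: fun_eq_iff mu_MI_PD_decomposition \<Delta>_def imputation_average_def)
  have \<Delta>: "integrable M \<Delta>" "expectation \<Delta> = 0"
    using ybar_obs_moments imputation_average_moments by (simp_all add: \<Delta>_def[abs_def] prob_space)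
  note \<Delta>_square = deviation_second_moment[folded \<Delta>_def]
  have "integrable M (\<lambda>\<omega>. \<mu>\<^sup>2 + (\<Delta> \<omega>)\<^sup>2 + 2 * \<mu> * \<Delta> \<omega>)"
    using \<Delta> \<Delta>_square by simp
  then have "integrable M (\<lambda>\<omega>. (\<mu> + \<Delta> \<omega>)\<^sup>2)"
    by (simp add: power2_sum)
  moreover have "expectation (\<lambda>\<omega>. \<mu> + \<Delta> \<omega>) = \<mu>"
    using \<Delta> by (simp add: prob_space)
  ultimately show ?thesis
    unfolding mu using \<Delta> \<Delta>_square by (simp add: prob_space)
qed

end

theorem mainTheorem5:
  fixes M :: "'a measure"
    and n_obs n_mis D :: nat
    and \<mu> \<sigma> \<nu>_prior :: real
    and Y U ZPD :: "nat \<Rightarrow> 'a \<Rightarrow> real"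
    and Zimp :: "nat \<Rightarrow> nat \<Rightarrow> 'a \<Rightarrow> real"
  assumes "prob_space M"
    and "n_obs \<ge> 2" and "n_mis \<ge> 1" and "D \<ge> 1"
    and "\<sigma> > 0"
    and "real n_obs + \<nu>_prior > 3"
    and "\<And>i. i < n_obs \<Longrightarrow> distributed M lborel (Y i) (normal_density \<mu> \<sigma>)"
    and "\<And>d. d < D \<Longrightarrow>
           distributed M lborel (U d) (chi2_density (\<nu>_prior + real n_obs - 1))"
    and "\<And>d. d < D \<Longrightarrow>
           distributed M lborel (ZPD d) (normal_density 0 (1 / sqrt (real n_obs)))"
    and "\<And>i d. i < n_mis \<Longrightarrow> d < D \<Longrightarrow>
           distributed M lborel (Zimp i d) std_normal_density"
    and "prob_space.indep_vars M (\<lambda>_. borel) (all_rvs Y U ZPD Zimp) (rv_index_set n_obs n_mis D)"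
  shows "integrable M (mu_MI_PD n_obs n_mis D Y U ZPD Zimp)
    \<and> integrable M (\<lambda>\<omega>. (mu_MI_PD n_obs n_mis D Y U ZPD Zimp \<omega>)\<^sup>2)
    \<and> prob_space.expectation M (mu_MI_PD n_obs n_mis D Y U ZPD Zimp) = \<mu>
    \<and> prob_space.variance M (mu_MI_PD n_obs n_mis D Y U ZPD Zimp) =
        \<sigma>\<^sup>2 / real n_obs *
        (1 + real n_mis * (real n_obs - 1) /
             (real D * real (n_obs + n_mis) * (real n_obs + \<nu>_prior - 3)))"
proof -
  interpret imputation_model M n_obs n_mis D \<mu> \<sigma> \<nu>_prior Y U ZPD Zimp
    using assms by (intro imputation_model.intro imputation_model_axioms.intro) auto
  show ?thesis
    by (rule mu_MI_PD_moments)
qed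

end
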